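(* For every $n\ge4$, $\operatorname{sdim}(K_{n-3}+\epsilon_3)=n-1$.
   Context: $\epsilon_3$ is the graph with three vertices and no edges; $K_{n-3}+\epsilon_3$ is obtained from disjoint copies of $K_{n-3}$ and $\epsilon_3$ by adding all edges between them. A unit-distance embedding of a graph $G$ in $\mathbb{R}^n$ is an injective map $f$ from the vertex set of $G$ to $\mathbb{R}^n$ such that $|f(u)-f(v)|=1$ for every edge $uv$ and no point $f(w)$ lies on the segment $[f(u),f(v)]$ for an edge $uv$ with $w\notin\{u,v\}$. $G$ admits a spherical embedding of dimension $k$ and radius $r$ if $G$ has a unit-distance embedding in $\mathbb{R}^k$ all of whose vertices lie on a sphere $\{x\in\mathbb{R}^k:|x-c|=r\}$. $\operatorname{sdim}G$ is the least $k$ such that $G$ admits a spherical embedding of dimension $k$ and some radius $r<1$. *)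

theory Defs
  imports Complex_Main
begin

text \<open>Points of R^k are represented as functions nat => real vanishing outside {..<k}.\<close>

definition in_Rk :: "nat \<Rightarrow> (nat \<Rightarrow> real) \<Rightarrow> bool" where
  "in_Rk k x \<longleftrightarrow> (\<forall>i\<ge>k. x i = 0)"

definition dist_k :: "nat \<Rightarrow> (nat \<Rightarrow> real) \<Rightarrow> (nat \<Rightarrow> real) \<Rightarrow> real" where
  "dist_k k x y = sqrt (\<Sum>i<k. (x i - y i)^2)"

definition on_segment :: "(nat \<Rightarrow> real) \<Rightarrow> (nat \<Rightarrow> real) \<Rightarrow> (nat \<Rightarrow> real) \<Rightarrow> bool" where
  "on_segment x a b \<longleftrightarrow> (\<exists>t::real. 0 \<le> t \<and> t \<le> 1 \<and> x = (\<lambda>i. (1 - t) * a i + t * b i))"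

text \<open>A graph is given by a vertex set V and a symmetric edge relation E (only used on V).\<close>

definition unit_distance_embedding ::
  "nat \<Rightarrow> 'a set \<Rightarrow> ('a \<Rightarrow> 'a \<Rightarrow> bool) \<Rightarrow> ('a \<Rightarrow> nat \<Rightarrow> real) \<Rightarrow> bool" where
  "unit_distance_embedding k V E f \<longleftrightarrow>
     (\<forall>v\<in>V. in_Rk k (f v)) \<and> inj_on f V \<and>
     (\<forall>u\<in>V. \<forall>v\<in>V. E u v \<longrightarrow> dist_k k (f u) (f v) = 1) \<and>
     (\<forall>u\<in>V. \<forall>v\<in>V. \<forall>w\<in>V. E u v \<and> w \<noteq> u \<and> w \<noteq> v \<longrightarrow> \<not> on_segment (f w) (f u) (f v))"

definition spherical_embedding ::
  "nat \<Rightarrow> real \<Rightarrow> 'a set \<Rightarrow> ('a \<Rightarrow> 'a \<Rightarrow> bool) \<Rightarrow> bool" where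
  "spherical_embedding k r V E \<longleftrightarrow>
     (\<exists>f c. unit_distance_embedding k V E f \<and> in_Rk k c \<and> (\<forall>v\<in>V. dist_k k (f v) c = r))"

definition sdim :: "'a set \<Rightarrow> ('a \<Rightarrow> 'a \<Rightarrow> bool) \<Rightarrow> nat" where
  "sdim V E = (LEAST k. \<exists>r<1. spherical_embedding k r V E)"

text \<open>K_{n-3} + eps_3 on vertex set {..<n}: vertices 0,1,2 form eps_3, the rest K_{n-3},
  plus all edges between the two parts.\<close>

definition K_plus_eps3_edge :: "nat \<Rightarrow> nat \<Rightarrow> bool" where
  "K_plus_eps3_edge u v \<longleftrightarrow> u \<noteq> v \<and> \<not> (u < 3 \<and> v < 3)"

end

theory Submission
  imports Defs "HOL-Library.Function_Algebras"
begin

(* Lower bound: translate a spherical embedding so that its centre is the origin. The vectors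
   y_v then all have squared length r^2 and adjacent ones have inner product s = r^2 - 1/2. If
   the dimension is at most n - 2, then for two vertices p, q of eps_3 the n - 1 vectors y_p, y_q
   and y_j (j in K_{n-3}) are linearly dependent; the Gram relations force the coefficients of
   the dependence to be constant on the clique and equal at p and q, which determines y_p + y_q
   as a fixed multiple of the sum of the y_j. Taking {p, q} = {0, 1} and {0, 2} gives y_1 = y_2.
   Upper bound: the vertices of K_{n-3} + eps_3 embed into the cross-polytope of radius
   1/sqrt 2 in R^(n-1), two vertices of eps_3 being antipodal; distinct points of a sphere
   never lie on a chord between two others. *)

(* Functions carry no real_vector instance, so the vector space of nat => real is set up by hand. *)
definition fun_scale :: "real \<Rightarrow> ('a \<Rightarrow> real) \<Rightarrow> 'a \<Rightarrow> real" where
  "fun_scale c x = (\<lambda>i. c * x i)"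

interpretation fun_vs: vector_space fun_scale
  by unfold_locales (auto simp: fun_scale_def fun_eq_iff algebra_simps)

lemma sum_fun_apply: "(\<Sum>x\<in>A. g x) i = (\<Sum>x\<in>A. g x i :: 'b :: comm_monoid_add)"
  by (induction A rule: infinite_finite_induct) auto

definition axis_point :: "nat \<Rightarrow> real \<Rightarrow> nat \<Rightarrow> real" where
  "axis_point j a = (\<lambda>i. if i = j then a else 0)"

lemma in_Rk_axis_point: "j < k \<Longrightarrow> in_Rk k (axis_point j a)"
  by (simp add: in_Rk_def axis_point_def)

lemma axis_point_eq_iff: "a \<noteq> 0 \<Longrightarrow> axis_point p a = axis_point q b \<longleftrightarrow> p = q \<and> a = b"
  by (auto simp: axis_point_def fun_eq_iff split: if_splits)

lemma in_Rk_span_axes: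
  assumes "in_Rk k x"
  shows "x \<in> fun_vs.span ((\<lambda>j. axis_point j 1) ` {..<k})"
proof -
  have "x = (\<Sum>j<k. fun_scale (x j) (axis_point j 1))"
    using assms
    by (auto simp: fun_eq_iff sum_fun_apply fun_scale_def axis_point_def in_Rk_def
        if_distrib cong: if_cong)
  also have "\<dots> \<in> fun_vs.span ((\<lambda>j. axis_point j 1) ` {..<k})"
    by (intro fun_vs.span_sum fun_vs.span_scale fun_vs.span_base) auto
  finally show ?thesis .
qed

lemma in_Rk_set_dependent:
  assumes "finite Y" "card Y > k" "\<forall>x\<in>Y. in_Rk k x"
  shows "fun_vs.dependent Y"
proof (rule ccontr)
  let ?A = "(\<lambda>j. axis_point j 1) ` {..<k}"
  assume "\<not> fun_vs.dependent Y"
  moreover have "Y \<subseteq> fun_vs.span ?A" using assms(3) in_Rk_span_axes by blast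
  ultimately have "card Y \<le> card ?A" using fun_vs.independent_span_bound[of ?A Y] by simp
  also have "\<dots> \<le> k" using card_image_le[of "{..<k}"] by simp
  finally show False using assms(2) by simp
qed

lemma in_Rk_linear_dependence:
  fixes y :: "'a \<Rightarrow> nat \<Rightarrow> real"
  assumes "finite W" "card W > k" "\<forall>v\<in>W. in_Rk k (y v)"
  obtains b where "\<forall>i. (\<Sum>v\<in>W. b v * y v i) = 0" "\<exists>v\<in>W. b v \<noteq> 0"
proof (cases "inj_on y W")
  case True
  have "fun_vs.dependent (y ` W)"
    using assms True by (intro in_Rk_set_dependent) (auto simp: card_image)
  then obtain T a where T: "finite T" "T \<subseteq> y ` W" "(\<Sum>x\<in>T. fun_scale (a x) x) = 0"
      "\<exists>x\<in>T. a x \<noteq> 0"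
    unfolding fun_vs.dependent_explicit by blast
  define b where "b v = (if y v \<in> T then a (y v) else 0)" for v
  have "(\<Sum>v\<in>W. b v * y v i) = 0" for i
  proof -
    have "(\<Sum>v\<in>W. b v * y v i) = (\<Sum>v\<in>W. if y v \<in> T then a (y v) * y v i else 0)"
      by (rule sum.cong) (simp_all add: b_def)
    also have "\<dots> = (\<Sum>x\<in>y ` W. if x \<in> T then a x * x i else 0)"
      using sum.reindex[OF True, of "\<lambda>x. if x \<in> T then a x * x i else 0"] by simp
    also have "\<dots> = (\<Sum>x\<in>T. a x * x i)"
      using T(2) assms(1) by (simp add: sum.inter_restrict[symmetric] Int_absorb1)
    also have "\<dots> = 0"
      using arg_cong[OF T(3), of "\<lambda>z. z i"] by (simp add: sum_fun_apply fun_scale_def)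
    finally show ?thesis .
  qed
  moreover have "\<exists>v\<in>W. b v \<noteq> 0" using T(2,4) by (auto simp: b_def)
  ultimately show ?thesis using that by blast
next
  case False
  then obtain u v where uv: "u \<in> W" "v \<in> W" "u \<noteq> v" "y u = y v"
    unfolding inj_on_def by blast
  define b where "b x = (if x = u then 1 else if x = v then -1 else 0 :: real)" for x
  have "(\<Sum>x\<in>W. b x * y x i) = 0" for i
  proof -
    have "(\<Sum>x\<in>W. b x * y x i)
        = (\<Sum>x\<in>W. (if x = u then y x i else 0) - (if x = v then y x i else 0))"
      using uv(3) by (intro sum.cong) (auto simp: b_def)
    also have "\<dots> = 0" using assms(1) uv by (simp add: sum_subtractf)
    finally show ?thesis .
  qed
  then show ?thesis using uv by (intro that[of b]) (auto simp: b_def)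
qed

definition inner_k :: "nat \<Rightarrow> (nat \<Rightarrow> real) \<Rightarrow> (nat \<Rightarrow> real) \<Rightarrow> real" where
  "inner_k k x y = (\<Sum>i<k. x i * y i)"

lemma inner_k_commute: "inner_k k x y = inner_k k y x"
  by (simp add: inner_k_def mult.commute)

lemma inner_k_sum_right: "inner_k k x (\<Sum>j\<in>C. y j) = (\<Sum>j\<in>C. inner_k k x (y j))"
  by (simp add: inner_k_def sum_fun_apply sum_distrib_left sum.swap[of _ C])

lemma sum_mult_inner_k_eq_0:
  assumes "\<forall>i. (\<Sum>v\<in>W. b v * y v i) = 0"
  shows "(\<Sum>v\<in>W. b v * inner_k k (y v) z) = 0"
proof -
  have "(\<Sum>v\<in>W. b v * inner_k k (y v) z) = (\<Sum>i<k. (\<Sum>v\<in>W. b v * y v i) * z i)"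
    by (simp add: inner_k_def sum_distrib_left sum_distrib_right sum.swap[of _ W] mult.assoc)
  also have "\<dots> = 0" using assms by simp
  finally show ?thesis .
qed

lemma dist_k_squared: "(dist_k k x y)^2 = (\<Sum>i<k. (x i - y i)^2)"
  by (simp add: dist_k_def sum_nonneg)

lemma sum_sq_diff_eq_inner_k:
  "(\<Sum>i<k. (x i - y i)^2) = inner_k k x x + inner_k k y y - 2 * inner_k k x y"
  by (simp add: inner_k_def power2_eq_square algebra_simps sum.distrib sum_subtractf
      sum_distrib_left)

lemma in_Rk_diff: "in_Rk k x \<Longrightarrow> in_Rk k y \<Longrightarrow> in_Rk k (x - y)"
  by (simp add: in_Rk_def)

lemma sum_sq_diff_eq_0_iff:
  assumes "in_Rk k x" "in_Rk k y"
  shows "(\<Sum>i<k. (x i - y i)^2) = 0 \<longleftrightarrow> x = y"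
proof
  assume "(\<Sum>i<k. (x i - y i)^2) = 0"
  then have "\<forall>i<k. x i = y i" by (simp add: sum_nonneg_eq_0_iff)
  with assms show "x = y" by (metis in_Rk_def not_less ext)
qed simp

lemma inner_k_diff_self: "inner_k k (x - c) (x - c) = (dist_k k x c)^2"
  unfolding dist_k_squared inner_k_def by (simp add: power2_eq_square)

lemma inner_k_diff_eq_dist_k:
  "inner_k k (x - c) (z - c) = ((dist_k k x c)^2 + (dist_k k z c)^2 - (dist_k k x z)^2) / 2"
proof -
  have "(dist_k k x z)^2
      = inner_k k (x - c) (x - c) + inner_k k (z - c) (z - c) - 2 * inner_k k (x - c) (z - c)"
    using sum_sq_diff_eq_inner_k[where k = k and x = "x - c" and y = "z - c"]
    by (simp add: dist_k_squared)
  then show ?thesis by (simp add: inner_k_diff_self)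
qed

lemma not_on_segment_if_on_sphere:
  assumes "in_Rk k a" "in_Rk k b"
    and "dist_k k a c = r" "dist_k k b c = r" "dist_k k w c = r"
    and "w \<noteq> a" "w \<noteq> b"
  shows "\<not> on_segment w a b"
proof
  assume "on_segment w a b"
  then obtain t where t: "0 \<le> t" "t \<le> 1" "w = (\<lambda>i. (1 - t) * a i + t * b i)"
    unfolding on_segment_def by blast
  have "t \<noteq> 0" "t \<noteq> 1" using assms(6,7) t(3) by auto
  have "r^2 = (\<Sum>i<k. (1 - t) * (a i - c i)^2 + t * (b i - c i)^2 - t * (1 - t) * (a i - b i)^2)"
    unfolding assms(5)[symmetric] dist_k_squared
    by (rule sum.cong) (auto simp: t(3) power2_eq_square algebra_simps)
  also have "\<dots> = r^2 - t * (1 - t) * (\<Sum>i<k. (a i - b i)^2)"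
    using dist_k_squared[of k a c] dist_k_squared[of k b c] assms(3,4)
    by (simp add: sum.distrib sum_subtractf sum_distrib_left[symmetric] algebra_simps)
  finally have "(\<Sum>i<k. (a i - b i)^2) = 0"
    using \<open>t \<noteq> 0\<close> \<open>t \<noteq> 1\<close> by simp
  then have "a = b" using sum_sq_diff_eq_0_iff[OF assms(1,2)] by simp
  then show False using assms(6) t(3) by (simp add: algebra_simps)
qed

locale gram_clique_pair =
  fixes k :: nat and y :: "'a \<Rightarrow> nat \<Rightarrow> real" and C :: "'a set" and p q :: 'a and d s :: real
  assumes finite_C: "finite C"
    and p_notin_C: "p \<notin> C" and q_notin_C: "q \<notin> C"
    and dim_le: "k \<le> card C + 1"
    and in_Rk_y: "\<And>v. v \<in> insert p (insert q C) \<Longrightarrow> in_Rk k (y v)"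
    and inner_diag: "\<And>v. v \<in> insert p (insert q C) \<Longrightarrow> inner_k k (y v) (y v) = d"
    and inner_clique:
      "\<And>j v. j \<in> C \<Longrightarrow> v \<in> insert p (insert q C) \<Longrightarrow> v \<noteq> j \<Longrightarrow> inner_k k (y v) (y j) = s"
    and d_ne_s: "d \<noteq> s"
    and y_p_ne_y_q: "y p \<noteq> y q"
begin

lemma p_ne_q: "p \<noteq> q"
  using y_p_ne_y_q by blast

lemma sum_insert_pair:
  "(\<Sum>v\<in>insert p (insert q C). g v) = g p + g q + (\<Sum>v\<in>C. g v)"
  using finite_C p_notin_C q_notin_C p_ne_q by (simp add: add.assoc)

lemma inner_p_q_ne_d: "inner_k k (y p) (y q) \<noteq> d"
proof
  assume "inner_k k (y p) (y q) = d"
  then have "(\<Sum>i<k. (y p i - y q i)^2) = 0"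
    by (simp add: sum_sq_diff_eq_inner_k inner_diag)
  then show False
    using sum_sq_diff_eq_0_iff[of k "y p" "y q"] in_Rk_y y_p_ne_y_q by simp
qed

lemma inner_p_clique_sum: "inner_k k (y p) (\<Sum>j\<in>C. y j) = s * card C"
proof -
  have "(\<Sum>j\<in>C. inner_k k (y p) (y j)) = (\<Sum>j\<in>C. s)"
    using inner_clique p_notin_C by (intro sum.cong) auto
  then show ?thesis by (simp add: inner_k_sum_right)
qed

context
  fixes b :: "'a \<Rightarrow> real"
  assumes kernel: "\<forall>i. (\<Sum>v\<in>insert p (insert q C). b v * y v i) = 0"
begin

lemma kernel_coeff_clique:
  assumes "j \<in> C"
  shows "(d - s) * b j = - s * (\<Sum>v\<in>insert p (insert q C). b v)"
proof -
  let ?W = "insert p (insert q C)"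
  have "0 = (\<Sum>v\<in>?W. b v * inner_k k (y v) (y j))"
    using sum_mult_inner_k_eq_0[OF kernel] by simp
  also have "\<dots> = (\<Sum>v\<in>?W. s * b v + (if v = j then (d - s) * b v else 0))"
    using assms by (intro sum.cong) (auto simp: inner_diag inner_clique algebra_simps)
  also have "\<dots> = s * (\<Sum>v\<in>?W. b v) + (d - s) * b j"
    using assms finite_C by (simp add: sum.distrib sum_distrib_left)
  finally show ?thesis by simp
qed

lemma kernel_coeff_pair: "b p = b q"
proof -
  let ?t = "inner_k k (y p) (y q)"
  have inner_C: "inner_k k (y j) (y v) = s" if "j \<in> C" "v \<in> {p, q}" for j v
    using that inner_clique[of j v] p_notin_C q_notin_C by (auto simp: inner_k_commute)
  have "0 = (\<Sum>v\<in>insert p (insert q C). b v * inner_k k (y v) (y p))"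
    using sum_mult_inner_k_eq_0[OF kernel] by simp
  also have "\<dots> = b p * d + b q * ?t + s * (\<Sum>v\<in>C. b v)"
    by (simp add: sum_insert_pair inner_diag inner_C inner_k_commute sum_distrib_left
        mult.commute)
  finally have eq_p: "b p * d + b q * ?t + s * (\<Sum>v\<in>C. b v) = 0" by simp
  have "0 = (\<Sum>v\<in>insert p (insert q C). b v * inner_k k (y v) (y q))"
    using sum_mult_inner_k_eq_0[OF kernel] by simp
  also have "\<dots> = b q * d + b p * ?t + s * (\<Sum>v\<in>C. b v)"
    by (simp add: sum_insert_pair inner_diag inner_C sum_distrib_left mult.commute)
  finally have eq_q: "b q * d + b p * ?t + s * (\<Sum>v\<in>C. b v) = 0" by simp
  from eq_p eq_q have "(b p - b q) * (d - ?t) = 0" by (simp add: algebra_simps)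
  then show ?thesis using inner_p_q_ne_d by simp
qed

end

theorem pair_sum_eq:
  "y p + y q = fun_scale (2 * s / (d - s + s * card C)) (\<Sum>j\<in>C. y j)"
proof -
  let ?W = "insert p (insert q C)"
  let ?S = "\<Sum>j\<in>C. y j"
  let ?D = "d - s + s * card C"
  have "card ?W > k" using finite_C p_notin_C q_notin_C p_ne_q dim_le by simp
  then obtain b where kernel: "\<forall>i. (\<Sum>v\<in>?W. b v * y v i) = 0" and nonzero: "\<exists>v\<in>?W. b v \<noteq> 0"
    using in_Rk_linear_dependence[of ?W k y] finite_C in_Rk_y by blast
  define \<alpha> where "\<alpha> = - s * sum b ?W / (d - s)"
  define \<beta> where "\<beta> = b p"
  have b_C: "b j = \<alpha>" if "j \<in> C" for j
    using kernel_coeff_clique[OF kernel that] d_ne_s by (simp add: \<alpha>_def field_simps)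
  have b_q: "b q = \<beta>" using kernel_coeff_pair[OF kernel] by (simp add: \<beta>_def)
  have "sum b ?W = 2 * \<beta> + card C * \<alpha>"
    using b_C b_q by (simp add: sum_insert_pair \<beta>_def)
  moreover have "\<alpha> * (d - s) = - s * sum b ?W" using d_ne_s by (simp add: \<alpha>_def)
  ultimately have \<alpha>_D: "\<alpha> * ?D = - 2 * s * \<beta>" by (simp add: algebra_simps)
  have lin: "\<alpha> * ?S i + \<beta> * (y p i + y q i) = 0" for i
  proof -
    have "(\<Sum>v\<in>C. b v * y v i) = \<alpha> * ?S i"
      using b_C by (simp add: sum_fun_apply sum_distrib_left)
    then show ?thesis
      using kernel[rule_format, of i] b_q by (simp add: sum_insert_pair \<beta>_def algebra_simps)
  qed
  show ?thesis
  proof (cases "\<beta> = 0")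
    case True
    then have "\<alpha> \<noteq> 0" using nonzero b_C b_q by (auto simp: \<beta>_def)
    then have "?S = 0" using lin True by (simp add: fun_eq_iff)
    then have "s * card C = 0" using inner_p_clique_sum by (simp add: inner_k_def)
    then have "?D = d - s" by simp
    moreover have "?D = 0" using \<alpha>_D True \<open>\<alpha> \<noteq> 0\<close> by simp
    ultimately show ?thesis using d_ne_s by simp
  next
    case False
    then have "?D \<noteq> 0" using \<alpha>_D d_ne_s by auto
    have "(y p i + y q i) * ?D = 2 * s * ?S i" for i
    proof -
      have "\<beta> * (y p i + y q i) = - \<alpha> * ?S i" using lin[of i] by linarith
      then have "\<beta> * ((y p i + y q i) * ?D) = - (\<alpha> * ?D) * ?S i"
        by (metis mult.assoc mult.commute mult_minus_left)
      also have "\<dots> = \<beta> * (2 * s * ?S i)" using \<alpha>_D by simp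
      finally show ?thesis using False by simp
    qed
    then show ?thesis
      using \<open>?D \<noteq> 0\<close> by (simp add: fun_eq_iff fun_scale_def field_simps)
  qed
qed

end

lemma spherical_embedding_K_plus_eps3_dim_ge:
  assumes "n \<ge> 4" and "spherical_embedding k r {..<n} K_plus_eps3_edge"
  shows "n - 1 \<le> k"
proof (rule ccontr)
  assume "\<not> n - 1 \<le> k"
  from assms(2) obtain f c where emb: "unit_distance_embedding k {..<n} K_plus_eps3_edge f"
    and "in_Rk k c" and on_sphere: "\<forall>v\<in>{..<n}. dist_k k (f v) c = r"
    unfolding spherical_embedding_def by blast
  define y where "y v = f v - c" for v
  have pair: "y p + y q = fun_scale (2 * (r^2 - 1/2) / (1/2 + (r^2 - 1/2) * real (n - 3)))
      (\<Sum>j\<in>{3..<n}. y j)" if "p < 3" "q < 3" "p \<noteq> q" for p q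
  proof -
    have "f p \<noteq> f q" using emb that assms(1) by (auto simp: unit_distance_embedding_def inj_on_def)
    then interpret gram_clique_pair k y "{3..<n}" p q "r^2" "r^2 - 1/2"
    proof unfold_locales
      fix v assume "v \<in> insert p (insert q {3..<n})"
      then have "v < n" using that assms(1) by auto
      show "in_Rk k (y v)"
        using emb \<open>in_Rk k c\<close> \<open>v < n\<close> by (simp add: y_def in_Rk_diff unit_distance_embedding_def)
      show "inner_k k (y v) (y v) = r^2" using on_sphere \<open>v < n\<close> by (simp add: y_def inner_k_diff_self)
    next
      fix j v assume "j \<in> {3..<n}" "v \<in> insert p (insert q {3..<n})" "v \<noteq> j"
      then have "v < n" "j < n" "K_plus_eps3_edge v j"
        using that assms(1) by (auto simp: K_plus_eps3_edge_def)
      then show "inner_k k (y v) (y j) = r^2 - 1/2"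
        using emb on_sphere by (simp add: y_def inner_k_diff_eq_dist_k unit_distance_embedding_def)
    qed (use that \<open>\<not> n - 1 \<le> k\<close> assms(1) \<open>f p \<noteq> f q\<close> in \<open>auto simp: y_def\<close>)
    show ?thesis using pair_sum_eq by simp
  qed
  have "y 0 + y 1 = y 0 + y 2" using pair[of 0 1] pair[of 0 2] by simp
  then have "y 1 = y 2" by simp
  then have "f 1 = f 2" by (simp add: y_def)
  moreover have "inj_on f {..<n}" using emb by (simp add: unit_distance_embedding_def)
  ultimately show False using inj_onD[of f "{..<n}" 1 2] assms(1) by simp
qed

lemma dist_k_axis_point_0:
  assumes "j < k"
  shows "dist_k k (axis_point j a) 0 = \<bar>a\<bar>"
proof -
  have "(\<Sum>i<k. (axis_point j a i - 0 i)^2) = (\<Sum>i<k. if i = j then a^2 else 0)"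
    by (intro sum.cong) (auto simp: axis_point_def)
  then show ?thesis using assms by (simp add: dist_k_def)
qed

lemma dist_k_axis_points:
  assumes "p \<noteq> q" "p < k" "q < k"
  shows "dist_k k (axis_point p a) (axis_point q b) = sqrt (a^2 + b^2)"
proof -
  have "(\<Sum>i<k. (axis_point p a i - axis_point q b i)^2)
      = (\<Sum>i<k. (if i = p then a^2 else 0) + (if i = q then b^2 else 0))"
    using assms(1) by (intro sum.cong) (auto simp: axis_point_def)
  also have "\<dots> = a^2 + b^2" using assms(2,3) by (simp add: sum.distrib)
  finally show ?thesis by (simp add: dist_k_def)
qed

lemma spherical_embedding_K_plus_eps3:
  assumes "n \<ge> 4"
  shows "spherical_embedding (n - 1) (sqrt (1/2)) {..<n} K_plus_eps3_edge"
proof -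
  define h :: real where "h = sqrt (1/2)"
  define axis where "axis v = (if v < 2 then n - 3 else if v = 2 then n - 2 else v - 3)" for v
  define f where "f v = axis_point (axis v) (if v = 1 then - h else h)" for v
  have "h > 0" by (simp add: h_def)
  have axis_lt: "axis v < n - 1" if "v < n" for v
    using that assms by (auto simp: axis_def)
  have in_Rk_f: "in_Rk (n - 1) (f v)" if "v < n" for v
    using axis_lt[OF that] by (simp add: f_def in_Rk_axis_point)
  have on_sphere: "dist_k (n - 1) (f v) 0 = h" if "v < n" for v
    using axis_lt[OF that] \<open>h > 0\<close> by (simp add: f_def dist_k_axis_point_0)
  have inj: "inj_on f {..<n}"
  proof (rule inj_onI)
    fix u v assume "u \<in> {..<n}" "v \<in> {..<n}" "f u = f v"
    then show "u = v"
      using \<open>h > 0\<close> assms by (auto simp: f_def axis_def axis_point_eq_iff split: if_splits)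
  qed
  have unit: "dist_k (n - 1) (f u) (f v) = 1" if "u < n" "v < n" "K_plus_eps3_edge u v" for u v
  proof -
    have "axis u \<noteq> axis v" using that assms by (auto simp: axis_def K_plus_eps3_edge_def)
    then show ?thesis
      using axis_lt that by (simp add: f_def dist_k_axis_points power2_eq_square h_def)
  qed
  have "unit_distance_embedding (n - 1) {..<n} K_plus_eps3_edge f"
    unfolding unit_distance_embedding_def
  proof (intro conjI ballI impI)
    fix u v w assume "u \<in> {..<n}" "v \<in> {..<n}" "w \<in> {..<n}"
      and "K_plus_eps3_edge u v \<and> w \<noteq> u \<and> w \<noteq> v"
    then show "\<not> on_segment (f w) (f u) (f v)"
      using not_on_segment_if_on_sphere[OF in_Rk_f in_Rk_f on_sphere on_sphere on_sphere] inj
      by (auto dest: inj_onD)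
  qed (use in_Rk_f inj unit in auto)
  moreover have "in_Rk (n - 1) 0" by (simp add: in_Rk_def)
  ultimately show ?thesis
    unfolding spherical_embedding_def h_def[symmetric] using on_sphere by blast
qed

theorem mainTheorem17:
  fixes n :: nat
  assumes "n \<ge> 4"
  shows "sdim {..<n} K_plus_eps3_edge = n - 1"
  unfolding sdim_def
proof (rule Least_equality)
  show "\<exists>r<1. spherical_embedding (n - 1) r {..<n} K_plus_eps3_edge"
    using spherical_embedding_K_plus_eps3[OF assms] by (intro exI[of _ "sqrt (1/2)"]) simp
  show "n - 1 \<le> k" if "\<exists>r<1. spherical_embedding k r {..<n} K_plus_eps3_edge" for k
    using that spherical_embedding_K_plus_eps3_dim_ge[OF assms] by blast
qed

end
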